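(* Let $G$ be a finite loopless multigraph and let $p$ be a positive integer. Then $$({\rm Arb}_p(G))^p\ \ge\ \max\{{\rm Arb}(H): H \text{ a loopless multigraph such that } G \text{ contains a } \le(p-1)\text{-subdivision of } H \text{ as a subgraph}\}\ \ge\ \widetilde\nabla^{\rm m}_{(p-1)/2}(G).$$
   Context: All multigraphs are finite and loopless; a cycle of length $2$ is formed by two parallel edges, and $|C|$ denotes the number of edges of a cycle $C$. ${\rm Arb}(H)$ is the minimum number of forests into which the edge set of $H$ can be partitioned. ${\rm Arb}_p(G)$ is the minimum number of colours in an edge colouring of $G$ such that every cycle $C$ of $G$ receives at least $\min(|C|,p+1)$ distinct colours. For a non-negative integer $k$, a $\le k$-subdivision of a multigraph $H$ is obtained by replacing each edge of $H$ (each parallel copy separately) by a path with at most $k$ internal vertices, the paths being internally vertex-disjoint and avoiding the vertices of $H$. For a half-integer $r\ge 0$, $\widetilde\nabla^{\rm m}_r(G)$ is the maximum of $\|H\|/|H|$ over all loopless multigraphs $H$ (with $|H|\ge 1$) such that some $\le 2r$-subdivision of $H$ is a subgraph of $G$, where $\|H\|$ counts edges with multiplicity. *)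

theory Defs
  imports Main "HOL.Real"
begin

text \<open>Finite loopless multigraphs: vertices, edges (with identity, so parallel
edges are distinct elements of the edge set), and an endpoint map.\<close>

record ('v, 'e) mgraph =
  verts :: "'v set"
  edges :: "'e set"
  ends  :: "'e \<Rightarrow> 'v set"

definition mgraph :: "('v, 'e) mgraph \<Rightarrow> bool" where
  "mgraph G \<longleftrightarrow> finite (verts G) \<and> finite (edges G) \<and>
     (\<forall>e\<in>edges G. ends G e \<subseteq> verts G \<and> card (ends G e) = 2)"

text \<open>Edge set of a cycle: distinct vertices v_0..v_(k-1) and distinct edges
e_0..e_(k-1), k >= 2, e_i joining v_i and v_(i+1 mod k).  Length-2 cycles are
pairs of parallel edges.  |C| = card C.\<close>

definition is_cycle :: "('v, 'e) mgraph \<Rightarrow> 'e set \<Rightarrow> bool" where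
  "is_cycle G C \<longleftrightarrow> (\<exists>vs es. length vs = length es \<and> length es \<ge> 2 \<and>
     distinct vs \<and> distinct es \<and> set es \<subseteq> edges G \<and> set vs \<subseteq> verts G \<and>
     (\<forall>i<length es. ends G (es ! i) = {vs ! i, vs ! ((i + 1) mod length es)}) \<and>
     C = set es)"

definition arb :: "('v, 'e) mgraph \<Rightarrow> nat" where
  "arb H = (LEAST k. \<exists>c :: 'e \<Rightarrow> nat. (\<forall>e\<in>edges H. c e < k) \<and>
     (\<forall>i. \<not> (\<exists>C. is_cycle H C \<and> C \<subseteq> {e \<in> edges H. c e = i})))"

definition arb_p :: "('v, 'e) mgraph \<Rightarrow> nat \<Rightarrow> nat" where
  "arb_p G p = (LEAST k. \<exists>c :: 'e \<Rightarrow> nat. (\<forall>e\<in>edges G. c e < k) \<and>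
     (\<forall>C. is_cycle G C \<longrightarrow> card (c ` C) \<ge> min (card C) (p + 1)))"

definition is_path :: "('v, 'e) mgraph \<Rightarrow> 'v list \<Rightarrow> 'e list \<Rightarrow> bool" where
  "is_path G vs es \<longleftrightarrow> length vs = length es + 1 \<and> distinct vs \<and> distinct es \<and>
     set es \<subseteq> edges G \<and> set vs \<subseteq> verts G \<and>
     (\<forall>i<length es. ends G (es ! i) = {vs ! i, vs ! (i + 1)})"

definition internal :: "'v list \<Rightarrow> 'v set" where
  "internal vs = set (butlast (tl vs))"

definition has_subdiv :: "('v, 'e) mgraph \<Rightarrow> nat \<Rightarrow> ('a, 'b) mgraph \<Rightarrow> bool" where
  "has_subdiv G k H \<longleftrightarrow> (\<exists>(\<phi> :: 'a \<Rightarrow> 'v) (P :: 'b \<Rightarrow> 'v list \<times> 'e list).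
     inj_on \<phi> (verts H) \<and> \<phi> ` verts H \<subseteq> verts G \<and>
     (\<forall>e\<in>edges H. is_path G (fst (P e)) (snd (P e)) \<and>
        {hd (fst (P e)), last (fst (P e))} = \<phi> ` ends H e \<and>
        length (fst (P e)) \<le> k + 2 \<and>
        internal (fst (P e)) \<inter> \<phi> ` verts H = {}) \<and>
     (\<forall>e\<in>edges H. \<forall>f\<in>edges H. e \<noteq> f \<longrightarrow>
        internal (fst (P e)) \<inter> set (fst (P f)) = {} \<and>
        set (snd (P e)) \<inter> set (snd (P f)) = {}))"

text \<open>Multigraphs H are represented with vertex and edge type nat; this loses
nothing since G is finite, so every such H is finite and has an isomorphic copy
over nat.\<close>

definition max_arb_subdiv :: "('v, 'e) mgraph \<Rightarrow> nat \<Rightarrow> nat" where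
  "max_arb_subdiv G k = Max {arb H | H :: (nat, nat) mgraph. mgraph H \<and> has_subdiv G k H}"

text \<open>nabla^m_r(G) with the parameter k = 2r (a natural number).  The 0 only
matters when G has no vertex (empty maximum).\<close>

definition nabla_m :: "('v, 'e) mgraph \<Rightarrow> nat \<Rightarrow> real" where
  "nabla_m G k = Max (insert 0 {real (card (edges H)) / real (card (verts H)) |
      H :: (nat, nat) mgraph. mgraph H \<and> verts H \<noteq> {} \<and> has_subdiv G k H})"

end

theory Submission imports Defs begin

text \<open>
  Both parts rest on one combinatorial fact about finite multigraphs: a nonempty
  edge set in which no edge has a "leaf" endpoint (an endpoint met by no other edge
  of the set) contains a cycle.  Consequently a forest has at most as many edges as
  vertices, which gives  |E(H)| <= Arb(H) |V(H)|  and hence the second inequality.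

  For the first inequality fix a colouring c of G with k = Arb_p(G) colours in which
  every cycle C sees min(|C|, p+1) colours, and colour an edge e of H by the set of
  colours on the path P_e of G subdividing it: a nonempty set of at most p colours,
  so there are at most k^p such colour sets.  If a cycle of H were monochromatic with
  colour set S, the union of its subdivision paths would be leafless and so contain a
  cycle C' of G; since inner path vertices meet only their two path edges, C'
  contains some P_e entirely plus one more edge, so |C'| > |P_e| >= |S| while C'
  only sees the colours in S, contradicting the choice of c.
\<close>

section \<open>Cycles and paths\<close>

lemma cycle_card: "is_cycle G C \<Longrightarrow> 2 \<le> card C \<and> finite C \<and> C \<subseteq> edges G"
  unfolding is_cycle_def by (auto simp: distinct_card)

lemma cycle_nonempty: "is_cycle G C \<Longrightarrow> \<exists>e. e \<in> C"
  using cycle_card[of G C] by (metis card.empty ex_in_conv not_numeral_le_zero)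

lemma card_two_other: "card A = 2 \<Longrightarrow> v \<in> A \<Longrightarrow> \<exists>x. x \<noteq> v \<and> A = {v, x}"
  by (auto simp: card_2_iff)

lemma path_nonempty: "is_path G vs es \<Longrightarrow> hd vs \<noteq> last vs \<Longrightarrow> es \<noteq> []"
  unfolding is_path_def by (cases vs) auto

lemma path_edge_ends:
  assumes "is_path G vs es" "f \<in> set es" shows "ends G f \<subseteq> set vs"
proof -
  obtain i where i: "i < length es" "f = es ! i" using assms(2) by (auto simp: in_set_conv_nth)
  have "length vs = length es + 1" "ends G (es ! i) = {vs ! i, vs ! (i + 1)}"
    using assms(1) i(1) unfolding is_path_def by auto
  then show ?thesis using i by auto
qed

lemma path_inner_vertex:
  assumes "is_path G vs es" "0 < t" "t < length es" shows "vs ! t \<in> internal vs"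
proof -
  have "length vs = length es + 1" using assms(1) unfolding is_path_def by simp
  then have "butlast (tl vs) ! (t - 1) = vs ! t" "t - 1 < length (butlast (tl vs))"
    using assms(2,3) by (simp_all add: nth_butlast nth_tl)
  then show ?thesis unfolding internal_def by (metis nth_mem)
qed

lemma path_vertex_on_edge:
  assumes "is_path G vs es" "m < length es" "vs ! t \<in> ends G (es ! m)" "t < length vs"
  shows "t = m \<or> t = m + 1"
proof -
  have "ends G (es ! m) = {vs ! m, vs ! (m + 1)}" "distinct vs" "length vs = length es + 1"
    using assms(1,2) unfolding is_path_def by auto
  then show ?thesis using assms(2-4) by (auto simp: nth_eq_iff_index_eq)
qed

lemma path_end_edge:
  assumes "is_path G vs es" "es \<noteq> []" "w \<in> {hd vs, last vs}"
  shows "\<exists>f\<in>set es. w \<in> ends G f"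
proof -
  have P: "length vs = length es + 1" "\<And>i. i < length es \<Longrightarrow> ends G (es ! i) = {vs ! i, vs ! (i + 1)}"
    using assms(1) unfolding is_path_def by auto
  have "w = vs ! 0 \<or> w = vs ! (length es - 1 + 1)"
    using assms(2,3) P(1) by (cases vs) (auto simp: hd_conv_nth last_conv_nth)
  then show ?thesis using P(2)[of 0] P(2)[of "length es - 1"] assms(2) by (auto intro: nth_mem)
qed

lemma path_edge_neighbour:
  assumes path: "is_path G vs es" and f: "f \<in> set es" "w \<in> ends G f"
  shows "w \<in> {hd vs, last vs} \<or> (\<exists>f'\<in>set es. f' \<noteq> f \<and> w \<in> ends G f')"
proof -
  have P: "length vs = length es + 1" "distinct es"
    "\<And>i. i < length es \<Longrightarrow> ends G (es ! i) = {vs ! i, vs ! (i + 1)}"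
    using path unfolding is_path_def by auto
  obtain m where m: "m < length es" "f = es ! m" using f(1) by (auto simp: in_set_conv_nth)
  then obtain t where t: "t = m \<or> t = m + 1" "w = vs ! t" using P(3) f(2) by auto
  show ?thesis
  proof (cases "0 < t \<and> t < length es")
    case True
    define f' where "f' = (if t = m then es ! (t - 1) else es ! t)"
    have "f' \<in> set es" using True unfolding f'_def by auto
    moreover have "f' \<noteq> f" using True t(1) m P(2) unfolding f'_def by (auto simp: nth_eq_iff_index_eq)
    moreover have "w \<in> ends G f'" using True t P(3)[of t] P(3)[of "t - 1"] unfolding f'_def by auto
    ultimately show ?thesis by blast
  next
    case False
    then have "t = 0 \<or> t = length es" using t(1) m(1) by auto
    moreover have "vs \<noteq> []" using P(1) by auto
    ultimately have "w \<in> {hd vs, last vs}" using t(2) P(1) by (auto simp: hd_conv_nth last_conv_nth)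
    then show ?thesis by blast
  qed
qed

lemma path_close_cycle:
  assumes path: "is_path G vs es" and j: "j < length es"
    and f: "f \<in> edges G" "f \<notin> set es" "ends G f = {vs ! length es, vs ! j}"
  shows "is_cycle G (set (drop j es @ [f]))"
proof -
  define n where "n = length es"
  have P: "length vs = n + 1" "distinct vs" "distinct es" "set es \<subseteq> edges G" "set vs \<subseteq> verts G"
    "\<And>i. i < n \<Longrightarrow> ends G (es ! i) = {vs ! i, vs ! (i + 1)}"
    using path unfolding is_path_def n_def by auto
  define vs' where "vs' = drop j vs"
  define es' where "es' = drop j es @ [f]"
  have lv: "length vs' = n - j + 1" "length es' = n - j + 1"
    using P(1) j unfolding vs'_def es'_def n_def by auto
  show ?thesis
    unfolding is_cycle_def
  proof (intro exI[of _ vs'] exI[of _ es'] conjI allI impI)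
    fix i assume i: "i < length es'"
    show "ends G (es' ! i) = {vs' ! i, vs' ! ((i + 1) mod length es')}"
    proof (cases "i < n - j")
      case True
      then have "es' ! i = es ! (j + i)" "(i + 1) mod length es' = i + 1"
        using n_def lv unfolding es'_def by (simp_all add: nth_append)
      then show ?thesis using P(1) P(6)[of "j + i"] True unfolding vs'_def by simp
    next
      case False
      then have "i = n - j" using i lv by simp
      then have "es' ! i = f" "(i + 1) mod length es' = 0"
        using n_def lv unfolding es'_def by (simp_all add: nth_append)
      then show ?thesis using P(1) \<open>i = n - j\<close> f(3) j n_def unfolding vs'_def by auto
    qed
  next
    show "length vs' = length es'" "2 \<le> length es'" using lv j n_def by simp_all
    show "distinct vs'" using P(2) vs'_def by simp
    show "distinct es'" using P(3) f(2) es'_def by (auto dest: in_set_dropD)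
    show "set es' \<subseteq> edges G" using P(4) f(1) es'_def by (auto dest: in_set_dropD)
    show "set vs' \<subseteq> verts G" using P(5) vs'_def by (auto dest: in_set_dropD)
  qed (simp add: es'_def)
qed

lemma path_extend:
  assumes path: "is_path G vs es" and f: "f \<in> edges G" "f \<notin> set es"
    and x: "x \<in> verts G" "x \<notin> set vs" "ends G f = {vs ! length es, x}"
  shows "is_path G (vs @ [x]) (es @ [f])"
proof -
  have P: "length vs = length es + 1" "distinct vs" "distinct es" "set es \<subseteq> edges G"
    "set vs \<subseteq> verts G" "\<And>i. i < length es \<Longrightarrow> ends G (es ! i) = {vs ! i, vs ! (i + 1)}"
    using path unfolding is_path_def by auto
  show ?thesis
    unfolding is_path_def
  proof (intro conjI allI impI)
    fix i assume "i < length (es @ [f])"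
    then consider "i < length es" | "i = length es" by fastforce
    then show "ends G ((es @ [f]) ! i) = {(vs @ [x]) ! i, (vs @ [x]) ! (i + 1)}"
      by cases (use P(1,6) x(3) in \<open>simp_all add: nth_append\<close>)
  qed (use P f x in auto)
qed

section \<open>Leafless edge sets and forests\<close>

definition leafless :: "('v, 'e) mgraph \<Rightarrow> 'e set \<Rightarrow> bool" where
  "leafless G F \<longleftrightarrow> (\<forall>f\<in>F. \<forall>w\<in>ends G f. \<exists>f'\<in>F. f' \<noteq> f \<and> w \<in> ends G f')"

definition forest :: "('v, 'e) mgraph \<Rightarrow> 'e set \<Rightarrow> bool" where
  "forest G F \<longleftrightarrow> \<not> (\<exists>C. is_cycle G C \<and> C \<subseteq> F)"

lemma cycle_leafless:
  assumes "is_cycle G C" shows "leafless G C"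
proof -
  obtain vs es where c: "length vs = length es" "length es \<ge> 2" "distinct es"
    "\<And>i. i < length es \<Longrightarrow> ends G (es ! i) = {vs ! i, vs ! ((i + 1) mod length es)}" "C = set es"
    using assms unfolding is_cycle_def by blast
  define n where "n = length es"
  text \<open>The edges before and after position i in cyclic order share its two endpoints.\<close>
  have neighbour: "\<exists>f'\<in>C. f' \<noteq> es ! i \<and> w \<in> ends G f'"
    if j: "j < n" "j \<noteq> i" "w \<in> ends G (es ! j)" and i: "i < n" for i j w
  proof -
    have "es ! j \<noteq> es ! i" using i j c(3) n_def by (simp add: nth_eq_iff_index_eq)
    then show ?thesis using c(5) j n_def by auto
  qed
  show ?thesis unfolding leafless_def
  proof (intro ballI)
    fix f w assume f: "f \<in> C" and w: "w \<in> ends G f"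
    then obtain i where i: "i < n" "f = es ! i" using c(5) by (auto simp: in_set_conv_nth n_def)
    have "w = vs ! i \<or> w = vs ! ((i + 1) mod n)" using c(4) i w n_def by auto
    then show "\<exists>f'\<in>C. f' \<noteq> f \<and> w \<in> ends G f'"
    proof
      assume "w = vs ! i"
      moreover define j where "j = (if i = 0 then n - 1 else i - 1)"
      moreover have "j < n" "j \<noteq> i" "(j + 1) mod n = i" using i c(2) n_def unfolding j_def by auto
      ultimately show ?thesis using neighbour[of j i w] c(4)[of j] i n_def by auto
    next
      assume "w = vs ! ((i + 1) mod n)"
      moreover define j where "j = (i + 1) mod n"
      moreover have "j < n" "j \<noteq> i" using i c(2) n_def unfolding j_def by (auto simp: mod_Suc)
      ultimately show ?thesis using neighbour[of j i w] c(4)[of j] i n_def by auto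
    qed
  qed
qed

text \<open>Greedy path extension: a path inside a leafless edge set can be extended at its
  last vertex by an edge not on the path; this either closes a cycle or produces a
  longer path, and paths inside a finite set cannot grow forever.\<close>

lemma leafless_path_closes_cycle:
  assumes G: "mgraph G" and F: "F \<subseteq> edges G" "finite F" "leafless G F"
    and path: "is_path G vs es" "set es \<subseteq> F" "es \<noteq> []"
  shows "\<exists>C. is_cycle G C \<and> C \<subseteq> F"
  using path
proof (induction "card F - length es" arbitrary: vs es rule: less_induct)
  case less
  define n where "n = length es"
  have P: "length vs = n + 1" "distinct vs" "distinct es"
    "\<And>i. i < n \<Longrightarrow> ends G (es ! i) = {vs ! i, vs ! (i + 1)}"
    using less.prems(1) unfolding is_path_def n_def by auto
  have n1: "n \<ge> 1" using less.prems(3) n_def by (cases es) auto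
  have "es ! (n - 1) \<in> F" using less.prems(2) n1 n_def by auto
  moreover have "vs ! n \<in> ends G (es ! (n - 1))" using P(4)[of "n - 1"] n1 by auto
  ultimately obtain f where f: "f \<in> F" "f \<noteq> es ! (n - 1)" "vs ! n \<in> ends G f"
    using F(3) unfolding leafless_def by blast
  have "card (ends G f) = 2" "ends G f \<subseteq> verts G" using f(1) G F(1) unfolding mgraph_def by auto
  then obtain x where x: "x \<noteq> vs ! n" "ends G f = {vs ! n, x}" "x \<in> verts G"
    using card_two_other[OF _ f(3)] by blast
  text \<open>The only path edge at the last vertex is the last edge, so f is new.\<close>
  have f_new: "f \<notin> set es"
  proof
    assume "f \<in> set es"
    then obtain m where m: "m < n" "f = es ! m" by (auto simp: in_set_conv_nth n_def)
    then have "n = m \<or> n = m + 1" using path_vertex_on_edge[OF less.prems(1), of m n] f(3) P(1) n_def by simp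
    then show False using m f(2) by auto
  qed
  show ?case
  proof (cases "x \<in> set vs")
    case True
    then obtain j where j: "j < n + 1" "vs ! j = x" using P(1) by (auto simp: in_set_conv_nth)
    have "j < n" using j x(1) by (cases "j = n") auto
    then have "is_cycle G (set (drop j es @ [f]))"
      using path_close_cycle[OF less.prems(1)] f(1) F(1) f_new x(2) j n_def by auto
    moreover have "set (drop j es @ [f]) \<subseteq> F" using less.prems(2) f(1) by (auto dest: in_set_dropD)
    ultimately show ?thesis by blast
  next
    case False
    have path': "is_path G (vs @ [x]) (es @ [f])"
      using path_extend[OF less.prems(1)] f(1) F(1) f_new x(2,3) False n_def by auto
    have "card (insert f (set es)) \<le> card F" using F(2) less.prems(2) f(1) by (intro card_mono) auto
    then have "card F - length (es @ [f]) < card F - length es"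
      using f_new n_def distinct_card[OF P(3)] by simp
    from less.hyps[OF this path'] show ?thesis using less.prems(2) f(1) by auto
  qed
qed

lemma leafless_contains_cycle:
  assumes G: "mgraph G" and F: "F \<subseteq> edges G" "leafless G F" "F \<noteq> {}"
  shows "\<exists>C. is_cycle G C \<and> C \<subseteq> F"
proof -
  obtain f where f: "f \<in> F" using F(3) by blast
  then have "card (ends G f) = 2" "ends G f \<subseteq> verts G" using G F(1) unfolding mgraph_def by auto
  then obtain a b where ab: "a \<noteq> b" "ends G f = {a, b}" "a \<in> verts G" "b \<in> verts G"
    by (auto simp: card_2_iff)
  have "is_path G [a, b] [f]" unfolding is_path_def using ab f F(1) by auto
  moreover have "finite F" using G F(1) finite_subset unfolding mgraph_def by blast
  ultimately show ?thesis using leafless_path_closes_cycle[OF G F(1) _ F(2)] f by auto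
qed

text \<open>A forest has a leaf edge; deleting it together with its leaf vertex and inducting
  shows that a forest has at most as many edges as the vertex set spanning it.\<close>

lemma forest_card_le:
  assumes G: "mgraph G" and F: "F \<subseteq> edges G" "forest G F"
    and V: "\<forall>f\<in>F. ends G f \<subseteq> V" "finite V"
  shows "card F \<le> card V"
  using F V
proof (induction "card F" arbitrary: F V rule: less_induct)
  case less
  show ?case
  proof (cases "F = {}")
    case False
    have fin: "finite F" using G less.prems(1) unfolding mgraph_def by (meson finite_subset)
    have "\<not> leafless G F"
      using leafless_contains_cycle[OF G less.prems(1) _ False] less.prems(2)
      unfolding forest_def by blast
    then obtain f w where fw: "f \<in> F" "w \<in> ends G f" "\<forall>f'\<in>F. f' \<noteq> f \<longrightarrow> w \<notin> ends G f'"
      unfolding leafless_def by blast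
    have "card (F - {f}) < card F" using card_Diff1_less[OF fin fw(1)] .
    moreover have "forest G (F - {f})" using less.prems(2) unfolding forest_def by blast
    moreover have "\<forall>f'\<in>F - {f}. ends G f' \<subseteq> V - {w}" using less.prems(3) fw by blast
    ultimately have "card (F - {f}) \<le> card (V - {w})"
      using less.prems(1,4) by (intro less.hyps) auto
    moreover have "w \<in> V" using fw less.prems(3) by auto
    ultimately show ?thesis
      using card_Diff1_less[OF fin fw(1)] card_Diff1_less[OF less.prems(4) \<open>w \<in> V\<close>] fin fw by simp
  qed simp
qed

text \<open>Suppose the inner vertices of a path meet no edges of U other than their two path
  edges.  Then a leafless subset of U meeting the path must contain the whole path, and
  since the first vertex of the path needs a second edge, even one edge more.\<close>

lemma leafless_contains_path:
  assumes path: "is_path G vs es" and C': "leafless G C'" "C' \<subseteq> U"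
    and inner: "\<And>t f. 0 < t \<Longrightarrow> t < length es \<Longrightarrow> f \<in> U \<Longrightarrow> vs ! t \<in> ends G f \<Longrightarrow>
                   f = es ! (t - 1) \<or> f = es ! t"
    and meet: "es ! 0 \<in> C'"
  shows "set es \<subseteq> C'"
proof -
  have P: "length vs = length es + 1"
    "\<And>i. i < length es \<Longrightarrow> ends G (es ! i) = {vs ! i, vs ! (i + 1)}"
    using path unfolding is_path_def by auto
  have "es ! i \<in> C'" if "i < length es" for i
    using that
  proof (induction i)
    case (Suc i)
    then have "es ! i \<in> C'" "vs ! Suc i \<in> ends G (es ! i)" using P(2)[of i] by auto
    then obtain f' where f': "f' \<in> C'" "f' \<noteq> es ! i" "vs ! Suc i \<in> ends G f'"
      using C'(1) unfolding leafless_def by blast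
    then have "f' = es ! i \<or> f' = es ! Suc i" using inner[of "Suc i" f'] C'(2) Suc.prems by auto
    then show ?case using f' by auto
  qed (use meet in simp)
  then show ?thesis by (auto simp: in_set_conv_nth)
qed

lemma leafless_exceeds_path:
  assumes path: "is_path G vs es" and C': "leafless G C'" "C' \<subseteq> U" "finite C'"
    and inner: "\<And>t f. 0 < t \<Longrightarrow> t < length es \<Longrightarrow> f \<in> U \<Longrightarrow> vs ! t \<in> ends G f \<Longrightarrow>
                   f = es ! (t - 1) \<or> f = es ! t"
    and meet: "f \<in> set es" "f \<in> C'"
  shows "length es < card C'"
proof -
  have P: "length vs = length es + 1" "distinct es"
    "\<And>i. i < length es \<Longrightarrow> ends G (es ! i) = {vs ! i, vs ! (i + 1)}"
    using path unfolding is_path_def by auto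
  obtain j where j: "j < length es" "es ! j = f" using meet(1) by (auto simp: in_set_conv_nth)
  have walk_back: "es ! (j - d) \<in> C'" for d
  proof (induction d)
    case (Suc d)
    show ?case
    proof (cases "d < j")
      case True
      define t where "t = j - d"
      have t: "0 < t" "t < length es" "Suc d \<le> j" using True j(1) t_def by auto
      have "vs ! t \<in> ends G (es ! t)" using P(3)[of t] t by simp
      then obtain f' where f': "f' \<in> C'" "f' \<noteq> es ! t" "vs ! t \<in> ends G f'"
        using C'(1) Suc.IH t_def unfolding leafless_def by blast
      then have "f' = es ! (t - 1)" using inner[of t f'] C'(2) t by auto
      moreover have "t - 1 = j - Suc d" using t_def t by simp
      ultimately show ?thesis using f'(1) by simp
    qed (use Suc.IH in simp)
  qed (use j meet in simp)
  have all: "set es \<subseteq> C'"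
    using leafless_contains_path[OF path C'(1,2) inner] walk_back[of j] by auto
  have "0 < length es" using j(1) by linarith
  then have "es ! 0 \<in> C'" "vs ! 0 \<in> ends G (es ! 0)" using all P(3)[of 0] nth_mem[of 0 es] by auto
  then obtain f' where f': "f' \<in> C'" "f' \<noteq> es ! 0" "vs ! 0 \<in> ends G f'"
    using C'(1) unfolding leafless_def by blast
  have "f' \<notin> set es"
  proof
    assume "f' \<in> set es"
    then obtain m where "m < length es" "f' = es ! m" by (auto simp: in_set_conv_nth)
    then have "0 = m \<or> 0 = m + 1" using path_vertex_on_edge[OF path, of m 0] f'(3) P(1) by simp
    then show False using \<open>f' = es ! m\<close> f'(2) by auto
  qed
  then have "card (insert f' (set es)) = length es + 1" using distinct_card[OF P(2)] by simp
  moreover have "insert f' (set es) \<subseteq> C'" using all f'(1) by blast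
  ultimately show ?thesis using card_mono[OF C'(3)] by (metis Suc_eq_plus1 Suc_le_eq)
qed


section \<open>Colourings realising Arb and Arb_p\<close>

definition forest_colouring :: "('v, 'e) mgraph \<Rightarrow> nat \<Rightarrow> ('e \<Rightarrow> nat) \<Rightarrow> bool" where
  "forest_colouring H k c \<longleftrightarrow> (\<forall>e\<in>edges H. c e < k) \<and> (\<forall>i. forest H {e \<in> edges H. c e = i})"

definition cycle_colouring :: "('v, 'e) mgraph \<Rightarrow> nat \<Rightarrow> nat \<Rightarrow> ('e \<Rightarrow> nat) \<Rightarrow> bool" where
  "cycle_colouring G p k c \<longleftrightarrow> (\<forall>e\<in>edges G. c e < k) \<and>
     (\<forall>C. is_cycle G C \<longrightarrow> min (card C) (p + 1) \<le> card (c ` C))"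

lemma arb_Least: "arb H = (LEAST k. \<exists>c. forest_colouring H k c)"
  unfolding arb_def forest_colouring_def forest_def by simp

lemma arb_p_Least: "arb_p G p = (LEAST k. \<exists>c. cycle_colouring G p k c)"
  unfolding arb_p_def cycle_colouring_def by simp

text \<open>Giving all edges distinct colours is both a forest colouring (every colour class has
  one edge, while cycles have at least two) and a cycle colouring, so both minima are
  attained.\<close>

lemma injective_colouring:
  assumes "mgraph G"
  obtains c where "inj_on c (edges G)" "\<forall>e\<in>edges G. c e < card (edges G)"
proof -
  have "finite (edges G)" using assms unfolding mgraph_def by simp
  then obtain c where "bij_betw c (edges G) {0..<card (edges G)}" using ex_bij_betw_finite_nat by blast
  then show ?thesis using that unfolding bij_betw_def by fastforce
qed

lemma arb_attained:
  assumes "mgraph H"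
  shows "\<exists>c. forest_colouring H (arb H) c" and "arb H \<le> card (edges H)"
proof -
  obtain c where c: "inj_on c (edges H)" "\<forall>e\<in>edges H. c e < card (edges H)"
    using injective_colouring[OF assms] .
  have "forest H {e \<in> edges H. c e = i}" for i
  proof (unfold forest_def, rule notI, elim exE conjE)
    fix C assume C: "is_cycle H C" "C \<subseteq> {e \<in> edges H. c e = i}"
    have "\<forall>a\<in>C. \<forall>b\<in>C. a = b" using C(2) c(1) unfolding inj_on_def by blast
    then have "card C \<le> Suc 0" using cycle_card[OF C(1)] by (simp add: card_le_Suc0_iff_eq)
    then show False using cycle_card[OF C(1)] by simp
  qed
  then have "forest_colouring H (card (edges H)) c" using c(2) unfolding forest_colouring_def by blast
  then show "\<exists>c. forest_colouring H (arb H) c" "arb H \<le> card (edges H)"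
    unfolding arb_Least by (auto intro: LeastI Least_le)
qed

lemma arb_p_attained:
  assumes "mgraph G"
  shows "\<exists>c. cycle_colouring G p (arb_p G p) c"
proof -
  obtain c where c: "inj_on c (edges G)" "\<forall>e\<in>edges G. c e < card (edges G)"
    using injective_colouring[OF assms] .
  have "card (c ` C) = card C" if "is_cycle G C" for C
    using c(1) cycle_card[OF that] by (meson card_image inj_on_subset)
  then have "cycle_colouring G p (card (edges G)) c" using c(2) unfolding cycle_colouring_def by simp
  then show ?thesis unfolding arb_p_Least by (auto intro: LeastI)
qed

text \<open>Each colour class of a forest colouring has at most |V(H)| edges.\<close>

lemma edges_le_arb_verts:
  assumes H: "mgraph H" shows "card (edges H) \<le> arb H * card (verts H)"
proof -
  obtain c where c: "forest_colouring H (arb H) c" using arb_attained(1)[OF H] ..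
  define K where "K i = {e \<in> edges H. c e = i}" for i
  have "edges H = (\<Union>i<arb H. K i)" using c unfolding K_def forest_colouring_def by auto
  then have "card (edges H) \<le> (\<Sum>i<arb H. card (K i))" using card_UN_le[of "{..<arb H}" K] by simp
  also have "\<dots> \<le> (\<Sum>i<arb H. card (verts H))"
    using forest_card_le[OF H] c H unfolding K_def forest_colouring_def mgraph_def
    by (intro sum_mono) auto
  also have "\<dots> = arb H * card (verts H)" by simp
  finally show ?thesis .
qed


section \<open>Subdivisions\<close>

locale path_system =
  fixes G :: "('v, 'e) mgraph" and H :: "('a, 'b) mgraph"
    and \<phi> :: "'a \<Rightarrow> 'v" and pv :: "'b \<Rightarrow> 'v list" and pe :: "'b \<Rightarrow> 'e list"
  assumes G: "mgraph G" and H: "mgraph H"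
    and inj: "inj_on \<phi> (verts H)" and vert_map: "\<phi> ` verts H \<subseteq> verts G"
    and path: "e \<in> edges H \<Longrightarrow> is_path G (pv e) (pe e)"
    and path_ends: "e \<in> edges H \<Longrightarrow> {hd (pv e), last (pv e)} = \<phi> ` ends H e"
    and inner_disjoint: "e \<in> edges H \<Longrightarrow> f \<in> edges H \<Longrightarrow> e \<noteq> f \<Longrightarrow>
                           internal (pv e) \<inter> set (pv f) = {}"
    and edge_disjoint: "e \<in> edges H \<Longrightarrow> f \<in> edges H \<Longrightarrow> e \<noteq> f \<Longrightarrow>
                           set (pe e) \<inter> set (pe f) = {}"

lemma has_subdiv_path_system:
  assumes "mgraph G" "mgraph H" "has_subdiv G k H"
  obtains \<phi> pv pe where "path_system G H \<phi> pv pe" "\<forall>e\<in>edges H. length (pv e) \<le> k + 2"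
proof -
  obtain \<phi> P where sd: "inj_on \<phi> (verts H)" "\<phi> ` verts H \<subseteq> verts G"
     "\<forall>e\<in>edges H. is_path G (fst (P e)) (snd (P e)) \<and>
        {hd (fst (P e)), last (fst (P e))} = \<phi> ` ends H e \<and>
        length (fst (P e)) \<le> k + 2 \<and> internal (fst (P e)) \<inter> \<phi> ` verts H = {}"
     "\<forall>e\<in>edges H. \<forall>f\<in>edges H. e \<noteq> f \<longrightarrow>
        internal (fst (P e)) \<inter> set (fst (P f)) = {} \<and> set (snd (P e)) \<inter> set (snd (P f)) = {}"
    using assms(3) unfolding has_subdiv_def by (elim exE conjE) blast
  have "path_system G H \<phi> (\<lambda>e. fst (P e)) (\<lambda>e. snd (P e))"
    using assms(1,2) sd by unfold_locales auto
  moreover have "\<forall>e\<in>edges H. length (fst (P e)) \<le> k + 2" using sd(3) by blast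
  ultimately show ?thesis using that by blast
qed

context path_system
begin

lemma pe_nonempty: "e \<in> edges H \<Longrightarrow> pe e \<noteq> []"
proof -
  assume e: "e \<in> edges H"
  have "card (\<phi> ` ends H e) = 2"
    using H inj e unfolding mgraph_def by (metis card_image inj_on_subset)
  then have "card {hd (pv e), last (pv e)} = 2" using path_ends[OF e] by simp
  then have "hd (pv e) \<noteq> last (pv e)" by auto
  then show ?thesis using path_nonempty path e by blast
qed

text \<open>Picking the first edge of each path embeds E(H) into E(G).\<close>

lemma card_le:
  shows "card (edges H) \<le> card (edges G)" and "card (verts H) \<le> card (verts G)"
proof -
  have "inj_on (\<lambda>e. hd (pe e)) (edges H)"
  proof (rule inj_onI, rule ccontr)
    fix e f assume ef: "e \<in> edges H" "f \<in> edges H" "hd (pe e) = hd (pe f)" "e \<noteq> f"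
    have "hd (pe e) \<in> set (pe e)" "hd (pe f) \<in> set (pe f)"
      using pe_nonempty[OF ef(1)] pe_nonempty[OF ef(2)] by simp_all
    then show False using edge_disjoint[OF ef(1,2,4)] ef(3) by auto
  qed
  moreover have "hd (pe e) \<in> edges G" if "e \<in> edges H" for e
    using path[OF that] pe_nonempty[OF that] unfolding is_path_def by auto
  ultimately show "card (edges H) \<le> card (edges G)"
    using G unfolding mgraph_def by (intro card_inj_on_le) auto
  show "card (verts H) \<le> card (verts G)"
    using inj vert_map G unfolding mgraph_def by (meson card_inj_on_le)
qed


lemma inner_vertex_edges:
  assumes e: "e \<in> edges H" and t: "0 < t" "t < length (pe e)"
    and f: "e' \<in> edges H" "f \<in> set (pe e')" "pv e ! t \<in> ends G f"
  shows "f = pe e ! (t - 1) \<or> f = pe e ! t"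
proof (cases "e' = e")
  case True
  then obtain m where m: "m < length (pe e)" "f = pe e ! m" using f(2) by (auto simp: in_set_conv_nth)
  have "length (pv e) = length (pe e) + 1" using path[OF e] unfolding is_path_def by simp
  then have "t = m \<or> t = m + 1" using path_vertex_on_edge[OF path[OF e] m(1), of t] f(3) m(2) t by simp
  then show ?thesis using m(2) by auto
next
  case False
  have "pv e ! t \<in> internal (pv e)" using path_inner_vertex[OF path[OF e] t] .
  moreover have "pv e ! t \<in> set (pv e')" using path_edge_ends[OF path[OF f(1)] f(2)] f(3) by blast
  ultimately show ?thesis using inner_disjoint[OF e f(1)] False by blast
qed

text \<open>The subdivision paths of the edges of a cycle of H form a leafless edge set of G:
  at an end of a path the cycle continues with another edge of H, whose path starts
  there.\<close>

lemma cycle_paths_leafless: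
  assumes C: "is_cycle H C" shows "leafless G (\<Union>e\<in>C. set (pe e))"
  unfolding leafless_def
proof (intro ballI)
  fix f w assume f: "f \<in> (\<Union>e\<in>C. set (pe e))" and w: "w \<in> ends G f"
  then obtain e where e: "e \<in> C" "f \<in> set (pe e)" by blast
  have eH: "e \<in> edges H" using e(1) cycle_card[OF C] by blast
  show "\<exists>f'\<in>\<Union>e\<in>C. set (pe e). f' \<noteq> f \<and> w \<in> ends G f'"
  proof (cases "w \<in> {hd (pv e), last (pv e)}")
    case True
    then obtain u where u: "u \<in> ends H e" "w = \<phi> u" using path_ends[OF eH] by auto
    then obtain e' where e': "e' \<in> C" "e' \<noteq> e" "u \<in> ends H e'"
      using cycle_leafless[OF C] e(1) unfolding leafless_def by blast
    have e'H: "e' \<in> edges H" using e'(1) cycle_card[OF C] by blast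
    have "w \<in> {hd (pv e'), last (pv e')}" using path_ends[OF e'H] e'(3) u(2) by simp
    then obtain f' where f': "f' \<in> set (pe e')" "w \<in> ends G f'"
      using path_end_edge[OF path[OF e'H] pe_nonempty[OF e'H]] by blast
    moreover have "f' \<noteq> f" using edge_disjoint[OF eH e'H] e'(2) f'(1) e(2) by blast
    ultimately show ?thesis using e'(1) by blast
  next
    case False
    then show ?thesis using path_edge_neighbour[OF path[OF eH] e(2) w] e(1) by blast
  qed
qed

lemma cycle_lifts:
  assumes C: "is_cycle H C"
  obtains C' e where "is_cycle G C'" "C' \<subseteq> (\<Union>e\<in>C. set (pe e))" "e \<in> C" "length (pe e) < card C'"
proof -
  let ?U = "\<Union>e\<in>C. set (pe e)"
  have CH: "C \<subseteq> edges H" using cycle_card[OF C] by blast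
  obtain e0 where "e0 \<in> C" using cycle_nonempty[OF C] ..
  then have "hd (pe e0) \<in> ?U" using hd_in_set[OF pe_nonempty[of e0]] CH by blast
  moreover have "?U \<subseteq> edges G" using path CH unfolding is_path_def by blast
  ultimately obtain C' where C': "is_cycle G C'" "C' \<subseteq> ?U"
    using leafless_contains_cycle[OF G _ cycle_paths_leafless[OF C]] by blast
  obtain f where f: "f \<in> C'" using cycle_nonempty[OF C'(1)] ..
  then obtain e where e: "e \<in> C" "f \<in> set (pe e)" using C'(2) by blast
  have "length (pe e) < card C'"
  proof (rule leafless_exceeds_path[OF path cycle_leafless[OF C'(1)] C'(2)])
    show "finite C'" using cycle_card[OF C'(1)] by simp
    show "f \<in> set (pe e)" "f \<in> C'" using e f by auto
    fix t f' assume "0 < t" "t < length (pe e)" "f' \<in> ?U" "pv e ! t \<in> ends G f'"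
    then show "f' = pe e ! (t - 1) \<or> f' = pe e ! t"
      using inner_vertex_edges[of e t] e(1) CH by blast
  qed (use e(1) CH in blast)
  then show ?thesis using that C' e(1) by blast
qed


text \<open>The lifted cycle C' sees only colours from S, yet is longer than a path
  whose colour set is S.\<close>

lemma no_cycle_with_one_colour_set:
  assumes c: "cycle_colouring G p k c" and short: "\<forall>e\<in>edges H. length (pe e) \<le> p"
    and C: "is_cycle H C" and S: "\<forall>e\<in>C. c ` set (pe e) = S"
  shows False
proof -
  obtain C' e where C': "is_cycle G C'" "C' \<subseteq> (\<Union>e\<in>C. set (pe e))"
    and e: "e \<in> C" "length (pe e) < card C'"
    using cycle_lifts[OF C] .
  have "card S \<le> length (pe e)" using S e(1) by (metis card_image_le card_length finite_set le_trans)
  moreover have "length (pe e) \<le> p" using short e(1) cycle_card[OF C] by blast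
  moreover have "c ` C' \<subseteq> S" using C'(2) S by blast
  then have "card (c ` C') \<le> card S" using S e(1) by (metis card_mono finite_imageI finite_set)
  moreover have "min (card C') (p + 1) \<le> card (c ` C')" using c C'(1) unfolding cycle_colouring_def by blast
  ultimately show False using e(2) by linarith
qed

end

text \<open>There are at most |A|^p nonempty subsets of A with at most p elements: each is the
  set of some list of length p over A.\<close>

lemma card_small_subsets_le:
  assumes A: "finite A"
  shows "card {S. S \<subseteq> A \<and> S \<noteq> {} \<and> card S \<le> p} \<le> card A ^ p"
proof -
  let ?L = "{xs. set xs \<subseteq> A \<and> length xs = p}"
  have "{S. S \<subseteq> A \<and> S \<noteq> {} \<and> card S \<le> p} \<subseteq> set ` ?L"
  proof
    fix S assume S: "S \<in> {S. S \<subseteq> A \<and> S \<noteq> {} \<and> card S \<le> p}"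
    then have "finite S" using A finite_subset by blast
    then obtain ys where ys: "set ys = S" "distinct ys" using finite_distinct_list by blast
    then have "ys \<noteq> []" "length ys \<le> p" using S distinct_card[OF ys(2)] by auto
    define xs where "xs = ys @ replicate (p - length ys) (hd ys)"
    have "set xs = S" "length xs = p"
      using ys(1) \<open>ys \<noteq> []\<close> \<open>length ys \<le> p\<close> unfolding xs_def by auto
    then show "S \<in> set ` ?L" using S by (intro image_eqI[of _ _ xs]) auto
  qed
  then have "card {S. S \<subseteq> A \<and> S \<noteq> {} \<and> card S \<le> p} \<le> card (set ` ?L)"
    using A by (intro card_mono finite_imageI finite_lists_length_eq) auto
  also have "\<dots> \<le> card ?L" using A by (intro card_image_le finite_lists_length_eq)
  also have "\<dots> = card A ^ p" using card_lists_length_eq[OF A] by simp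
  finally show ?thesis .
qed

section \<open>The two inequalities\<close>

text \<open>Colouring each edge of H by (an index of) the colour set of its subdivision path is
  a forest colouring with at most k^p colours.\<close>

lemma (in path_system) arb_le_power:
  assumes c: "cycle_colouring G p k c" and short: "\<forall>e\<in>edges H. length (pe e) \<le> p"
  shows "arb H \<le> k ^ p"
proof -
  define T where "T = {S. S \<subseteq> {..<k} \<and> S \<noteq> {} \<and> card S \<le> p}"
  have "finite T" unfolding T_def by (rule finite_subset[of _ "Pow {..<k}"]) auto
  then obtain g where g: "bij_betw g T {0..<card T}" using ex_bij_betw_finite_nat by blast
  have ST: "c ` set (pe e) \<in> T" if e: "e \<in> edges H" for e
  proof -
    have "set (pe e) \<subseteq> edges G" using path[OF e] unfolding is_path_def by simp
    then have "c ` set (pe e) \<subseteq> {..<k}" using c unfolding cycle_colouring_def by auto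
    moreover have "length (pe e) \<le> p" using short e by blast
    then have "card (c ` set (pe e)) \<le> p"
      using card_image_le[OF finite_set, of c "pe e"] card_length[of "pe e"] by linarith
    ultimately show ?thesis using pe_nonempty[OF e] unfolding T_def by simp
  qed
  define col where "col e = g (c ` set (pe e))" for e
  have "forest_colouring H (k ^ p) col"
    unfolding forest_colouring_def
  proof (intro conjI ballI allI)
    fix e assume e: "e \<in> edges H"
    have "col e < card T" using bij_betw_apply[OF g ST[OF e]] unfolding col_def by simp
    also have "card T \<le> k ^ p" using card_small_subsets_le[of "{..<k}" p] unfolding T_def by simp
    finally show "col e < k ^ p" .
  next
    fix i
    show "forest H {e \<in> edges H. col e = i}"
    proof (unfold forest_def, rule notI, elim exE conjE)
      fix C assume C: "is_cycle H C" "C \<subseteq> {e \<in> edges H. col e = i}"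
      obtain e0 where e0: "e0 \<in> C" using cycle_nonempty[OF C(1)] ..
      have "\<forall>e\<in>C. c ` set (pe e) = c ` set (pe e0)"
      proof
        fix e assume e: "e \<in> C"
        have "e \<in> edges H" "e0 \<in> edges H" "col e = col e0" using C(2) e e0 by auto
        then show "c ` set (pe e) = c ` set (pe e0)"
          using ST bij_betw_imp_inj_on[OF g] unfolding col_def by (meson inj_onD)
      qed
      then show False by (rule no_cycle_with_one_colour_set[OF c short C(1)])
    qed
  qed
  then show ?thesis unfolding arb_Least by (blast intro: Least_le)
qed

lemma arb_le_arb_p_power:
  assumes G: "mgraph G" and p: "p \<ge> 1" and H: "mgraph H" and sd: "has_subdiv G (p - 1) H"
  shows "arb H \<le> arb_p G p ^ p"
proof -
  obtain \<phi> pv pe where ps: "path_system G H \<phi> pv pe" and len: "\<forall>e\<in>edges H. length (pv e) \<le> p - 1 + 2"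
    using has_subdiv_path_system[OF G H sd] .
  have "length (pe e) \<le> p" if "e \<in> edges H" for e
    using len that path_system.path[OF ps that] p unfolding is_path_def by auto
  moreover obtain c where "cycle_colouring G p (arb_p G p) c" using arb_p_attained[OF G] ..
  ultimately show ?thesis using path_system.arb_le_power[OF ps] by blast
qed

text \<open>Every H with a subdivision in G has at most |E(G)| edges and |V(G)| vertices, so
  both maxima range over finite sets.\<close>

lemma arb_subdiv_finite:
  assumes "mgraph G"
  shows "finite {arb H | H :: (nat, nat) mgraph. mgraph H \<and> has_subdiv G k H}"
proof (rule finite_subset[of _ "{..card (edges G)}"])
  show "{arb H | H :: (nat, nat) mgraph. mgraph H \<and> has_subdiv G k H} \<subseteq> {..card (edges G)}"
  proof
    fix a assume "a \<in> {arb H | H :: (nat, nat) mgraph. mgraph H \<and> has_subdiv G k H}"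
    then obtain H :: "(nat, nat) mgraph" where H: "a = arb H" "mgraph H" "has_subdiv G k H" by blast
    then obtain \<phi> pv pe where "path_system G H \<phi> pv pe" using has_subdiv_path_system[OF assms] by metis
    then show "a \<in> {..card (edges G)}"
      using H arb_attained(2)[OF H(2)] path_system.card_le(1) by fastforce
  qed
qed simp

lemma arb_le_max_arb_subdiv:
  assumes "mgraph G" "mgraph (H :: (nat, nat) mgraph)" "has_subdiv G k H"
  shows "arb H \<le> max_arb_subdiv G k"
  unfolding max_arb_subdiv_def using assms by (intro Max_ge arb_subdiv_finite) auto

text \<open>The empty multigraph has a subdivision in every G, so the maximum is over a
  nonempty set.\<close>

lemma arb_subdiv_nonempty: "{arb H | H :: (nat, nat) mgraph. mgraph H \<and> has_subdiv G k H} \<noteq> {}"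
proof -
  define H0 :: "(nat, nat) mgraph" where "H0 = \<lparr>verts = {}, edges = {}, ends = (\<lambda>_. {})\<rparr>"
  have "mgraph H0" "has_subdiv G k H0" unfolding H0_def mgraph_def has_subdiv_def by simp_all
  then show ?thesis by blast
qed

text \<open>Second inequality: |E(H)|/|V(H)| <= Arb(H) for every H.\<close>

lemma nabla_m_le_max_arb_subdiv:
  assumes G: "mgraph G"
  shows "nabla_m G k \<le> real (max_arb_subdiv G k)"
proof -
  let ?B = "{real (card (edges H)) / real (card (verts H)) |
      H :: (nat, nat) mgraph. mgraph H \<and> verts H \<noteq> {} \<and> has_subdiv G k H}"
  have "?B \<subseteq> (\<lambda>(a, b). real a / real b) ` ({..card (edges G)} \<times> {..card (verts G)})"
  proof
    fix x assume "x \<in> ?B"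
    then obtain H :: "(nat, nat) mgraph" where H: "mgraph H" "has_subdiv G k H"
      and x: "x = real (card (edges H)) / real (card (verts H))" by blast
    then obtain \<phi> pv pe where "path_system G H \<phi> pv pe" using has_subdiv_path_system[OF G] by metis
    then show "x \<in> (\<lambda>(a, b). real a / real b) ` ({..card (edges G)} \<times> {..card (verts G)})"
      using path_system.card_le x by fastforce
  qed
  then have "finite (insert 0 ?B)" using finite_subset by blast
  moreover have "x \<le> real (max_arb_subdiv G k)" if "x \<in> ?B" for x
  proof -
    obtain H :: "(nat, nat) mgraph" where H: "mgraph H" "verts H \<noteq> {}" "has_subdiv G k H"
      and x: "x = real (card (edges H)) / real (card (verts H))" using \<open>x \<in> ?B\<close> by blast
    have "0 < real (card (verts H))" using H(1,2) unfolding mgraph_def by auto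
    moreover have "real (card (edges H)) \<le> real (arb H) * real (card (verts H))"
      using edges_le_arb_verts[OF H(1)] by (metis of_nat_le_iff of_nat_mult)
    ultimately have "x \<le> real (arb H)" using x by (simp add: divide_le_eq)
    then show ?thesis using arb_le_max_arb_subdiv[OF G H(1,3)] by simp
  qed
  ultimately show ?thesis unfolding nabla_m_def by (intro Max.boundedI) auto
qed

theorem mainTheorem7:
  fixes G :: "('v, 'e) mgraph" and p :: nat
  assumes "mgraph G" and "p \<ge> 1"
  shows "max_arb_subdiv G (p - 1) \<le> arb_p G p ^ p \<and>
         nabla_m G (p - 1) \<le> real (max_arb_subdiv G (p - 1))"
proof
  show "max_arb_subdiv G (p - 1) \<le> arb_p G p ^ p"
    unfolding max_arb_subdiv_def
    using arb_le_arb_p_power[OF assms]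
    by (intro Max.boundedI arb_subdiv_finite[OF assms(1)] arb_subdiv_nonempty) blast
  show "nabla_m G (p - 1) \<le> real (max_arb_subdiv G (p - 1))"
    using nabla_m_le_max_arb_subdiv[OF assms(1)] .
qed

end
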